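(* Let $(G,k)$ be a connected quadratic Lie group with Lie algebra $\mathcal G$, and let $\langle x,y\rangle=k(u(x),y)$ be a flat left invariant semi-Riemannian metric on $G$, where $u$ is a $k$-symmetric linear isomorphism of $\mathcal G$. Let $L_x:y\mapsto xy$ denote left multiplication for the Levi-Civita product. Then $L_e^2=0$ for every $e\in\mathcal Z(\mathcal G)$. If moreover $\langle\,,\,\rangle$ is Riemannian or Lorentzian, then $L_e=0$ for every $e\in\mathcal Z(\mathcal G)$, and $u(\mathcal Z(\mathcal G))\subset\mathcal Z(\mathcal G)$.
   Context: A quadratic Lie group is a Lie group $G$ with a bi-invariant semi-Riemannian metric $k$; equivalently $k$ is a nondegenerate symmetric bilinear form on $\mathcal G$ with each $\mathrm{ad}_x$ $k$-skew-symmetric. The Levi-Civita product of a left invariant metric is the bilinear product on $\mathcal G$ defined by $(xy)^+=\nabla_{x^+}y^+$, where $x^+$ is the left invariant vector field with value $x$ at the unit and $\nabla$ the Levi-Civita connection; it is determined by the Koszul formula $2\langle xy,z\rangle=\langle[x,y],z\rangle-\langle[y,z],x\rangle+\langle[z,x],y\rangle$. $\mathcal Z(\mathcal G)$ is the center of $\mathcal G$. *)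

theory Defs
  imports "HOL-Analysis.Analysis"
begin

text \<open>A finite-dimensional real Lie algebra: the carrier is a type of class euclidean_space
  (only its finite-dimensional real vector space structure is used), br is the bracket.\<close>
definition lie_algebra :: "('a::euclidean_space \<Rightarrow> 'a \<Rightarrow> 'a) \<Rightarrow> bool" where
  "lie_algebra br \<longleftrightarrow> bilinear br \<and> (\<forall>x. br x x = 0) \<and>
     (\<forall>x y z. br x (br y z) + br y (br z x) + br z (br x y) = 0)"

definition sym_bilinear_nondeg :: "('a::euclidean_space \<Rightarrow> 'a \<Rightarrow> real) \<Rightarrow> bool" where
  "sym_bilinear_nondeg k \<longleftrightarrow> bilinear k \<and> (\<forall>x y. k x y = k y x) \<and>
     (\<forall>x. (\<forall>y. k x y = 0) \<longrightarrow> x = 0)"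

definition quadratic_form :: "('a::euclidean_space \<Rightarrow> 'a \<Rightarrow> 'a) \<Rightarrow> ('a \<Rightarrow> 'a \<Rightarrow> real) \<Rightarrow> bool" where
  "quadratic_form br k \<longleftrightarrow> sym_bilinear_nondeg k \<and>
     (\<forall>x y z. k (br x y) z = - k y (br x z))"

text \<open>Levi-Civita product of the metric g, determined by the Koszul formula.\<close>
definition lc_prod :: "('a::euclidean_space \<Rightarrow> 'a \<Rightarrow> 'a) \<Rightarrow> ('a \<Rightarrow> 'a \<Rightarrow> real) \<Rightarrow> 'a \<Rightarrow> 'a \<Rightarrow> 'a" where
  "lc_prod br g x y = (THE w. \<forall>z. 2 * g w z = g (br x y) z - g (br y z) x + g (br z x) y)"

definition flat :: "('a::euclidean_space \<Rightarrow> 'a \<Rightarrow> 'a) \<Rightarrow> ('a \<Rightarrow> 'a \<Rightarrow> real) \<Rightarrow> bool" where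
  "flat br g \<longleftrightarrow> (\<forall>x y z. lc_prod br g (br x y) z =
      lc_prod br g x (lc_prod br g y z) - lc_prod br g y (lc_prod br g x z))"

definition center :: "('a::euclidean_space \<Rightarrow> 'a \<Rightarrow> 'a) \<Rightarrow> 'a set" where
  "center br = {e. \<forall>x. br e x = 0}"

definition riemannian :: "('a::euclidean_space \<Rightarrow> 'a \<Rightarrow> real) \<Rightarrow> bool" where
  "riemannian g \<longleftrightarrow> (\<forall>x. x \<noteq> 0 \<longrightarrow> g x x > 0)"

definition neg_definite_on :: "('a::euclidean_space \<Rightarrow> 'a \<Rightarrow> real) \<Rightarrow> 'a set \<Rightarrow> bool" where
  "neg_definite_on g W \<longleftrightarrow> (\<forall>x\<in>W. x \<noteq> 0 \<longrightarrow> g x x < 0)"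

definition lorentzian :: "('a::euclidean_space \<Rightarrow> 'a \<Rightarrow> real) \<Rightarrow> bool" where
  "lorentzian g \<longleftrightarrow> (\<exists>W. subspace W \<and> dim W = 1 \<and> neg_definite_on g W) \<and>
     (\<forall>W. subspace W \<and> neg_definite_on g W \<longrightarrow> dim W \<le> 1)"

end

theory Submission
  imports Defs
begin

(* The proof has three parts.
   1. Using the invariance of k, the Koszul formula can be solved explicitly:
        x y = 1/2 (u\<inverse>([x,u y] - [u x,y]) + [x,y]).
      From this formula L_x is <,>-skew and the product is torsion free.
   2. For central e, torsion freeness gives L_e x = x e and L_e e = 0 (indeed
      [e,u e] = -[u e,e] = 0); flatness applied to [e,x] = 0 then yields L_e\<^sup>2 = 0.
      If moreover L_e = 0, the formula reads -1/2 u\<inverse>[u e, y] = 0, so u e is central.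
   3. A <,>-skew map A with A\<^sup>2 = 0 has totally null image.  For a Riemannian or
      Lorentzian form this forces A = 0: in the Lorentzian case a timelike t gives
      A t null and orthogonal to t, hence zero, and then every A x is null and
      orthogonal to t.  The key signature fact is that a null vector orthogonal to
      a timelike vector vanishes, since otherwise one builds a negative definite plane. *)

section \<open>Symmetric bilinear forms of Riemannian or Lorentzian signature\<close>

text \<open>Two orthogonal timelike vectors span a negative definite plane; this is what a
  Lorentzian form forbids.\<close>

lemma orthogonal_timelike_plane:
  fixes g :: "'a::euclidean_space \<Rightarrow> 'a \<Rightarrow> real"
  assumes bg: "bilinear g" and gs: "\<And>x y. g x y = g y x"
    and tt: "g t t < 0" and yy: "g y y < 0" and ty: "g t y = 0"
  shows "neg_definite_on g (span {t, y})" and "dim (span {t, y}) = 2"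
proof -
  have quad: "g (a *\<^sub>R t + b *\<^sub>R y) (a *\<^sub>R t + b *\<^sub>R y) = a*a * g t t + b*b * g y y" for a b
    using bg ty gs[of y t]
    by (simp add: bilinear_ladd bilinear_lmul bilinear_radd bilinear_rmul algebra_simps)
  have combination: "\<exists>a b. x = a *\<^sub>R t + b *\<^sub>R y" if "x \<in> span {t, y}" for x
  proof -
    have "\<exists>a. x - a *\<^sub>R t \<in> span {y}" using that span_insert[of t "{y}"] by auto
    then obtain a where "x - a *\<^sub>R t \<in> span {y}" ..
    then obtain b where "x - a *\<^sub>R t = b *\<^sub>R y" unfolding span_singleton by auto
    hence "x = a *\<^sub>R t + b *\<^sub>R y" by (simp add: algebra_simps)
    thus ?thesis by blast
  qed
  show "neg_definite_on g (span {t, y})"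
    unfolding neg_definite_on_def
  proof (intro ballI impI)
    fix x assume "x \<in> span {t, y}" "x \<noteq> 0"
    then obtain a b where x: "x = a *\<^sub>R t + b *\<^sub>R y" and "a \<noteq> 0 \<or> b \<noteq> 0"
      using combination by fastforce
    hence "a*a > 0 \<or> b*b > 0" by (metis not_real_square_gt_zero)
    hence "a*a * g t t < 0 \<or> b*b * g y y < 0"
      using tt yy by (auto simp: mult_pos_neg)
    moreover have "a*a * g t t \<le> 0" "b*b * g y y \<le> 0"
      using tt yy by (simp_all add: mult_nonneg_nonpos)
    ultimately show "g x x < 0" unfolding x quad by linarith
  qed
  have t_ne_y: "t \<noteq> y" using tt ty by auto
  have "t \<notin> span {y}"
  proof
    assume "t \<in> span {y}"
    then obtain c where "t = c *\<^sub>R y" unfolding span_singleton by auto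
    thus False using tt ty yy bg by (simp add: bilinear_lmul)
  qed
  moreover have "y \<noteq> 0" using yy bg by (auto simp: bilinear_lzero)
  ultimately have "independent {t, y}" using t_ne_y by (simp add: independent_insert)
  hence "dim (span {t, y}) = card {t, y}" by (rule dim_span_eq_card_independent)
  thus "dim (span {t, y}) = 2" using t_ne_y by simp
qed

lemma lorentzian_timelike:
  fixes g :: "'a::euclidean_space \<Rightarrow> 'a \<Rightarrow> real"
  assumes "lorentzian g" obtains t where "g t t < 0"
proof -
  obtain W where W: "subspace W" "dim W = 1" "neg_definite_on g W"
    using assms unfolding lorentzian_def by auto
  have "\<not> W \<subseteq> {0}" using W(2) dim_eq_0[of W] by auto
  then obtain t where "t \<in> W" "t \<noteq> 0" by auto
  thus thesis using W(3) that unfolding neg_definite_on_def by auto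
qed

text \<open>For a nondegenerate Lorentzian form, a null vector orthogonal to a timelike
  vector vanishes: otherwise, moving along it, one finds a second timelike vector
  orthogonal to the first.\<close>

lemma lorentzian_null_orthogonal:
  fixes g :: "'a::euclidean_space \<Rightarrow> 'a \<Rightarrow> real"
  assumes bg: "bilinear g" and gs: "\<And>x y. g x y = g y x"
    and nd: "\<And>x. (\<And>y. g x y = 0) \<Longrightarrow> x = 0"
    and lor: "lorentzian g" and tt: "g t t < 0" and ss: "g s s = 0" and st: "g s t = 0"
  shows "s = 0"
proof (rule ccontr)
  assume "s \<noteq> 0"
  then obtain z where z: "g s z \<noteq> 0" using nd by blast
  define w where "w = z - (g z t / g t t) *\<^sub>R t"
  have wt: "g w t = 0" unfolding w_def using bg tt
    by (simp add: bilinear_lsub bilinear_lmul)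
  have sw: "g s w = g s z" unfolding w_def using bg st gs[of s t]
    by (simp add: bilinear_rsub bilinear_rmul)
  define y where "y = w + (- (g w w + 1) / (2 * g s w)) *\<^sub>R s"
  have "g t y = 0" unfolding y_def using bg wt st gs
    by (simp add: bilinear_radd bilinear_rmul)
  moreover have "g y y = -1" unfolding y_def using bg gs[of w s] ss sw z
    by (simp add: bilinear_ladd bilinear_lmul bilinear_radd bilinear_rmul field_simps)
  ultimately have "neg_definite_on g (span {t, y})" "dim (span {t, y}) = 2"
    using orthogonal_timelike_plane[OF bg gs tt] by auto
  moreover have "subspace (span {t, y})" by (rule subspace_span)
  ultimately show False using lor unfolding lorentzian_def by fastforce
qed

text \<open>The signature argument: a skew map whose square vanishes is zero for a
  Riemannian or Lorentzian form, because its image is totally null.\<close>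

lemma skew_square_zero_vanishes:
  fixes g :: "'a::euclidean_space \<Rightarrow> 'a \<Rightarrow> real" and A :: "'a \<Rightarrow> 'a"
  assumes bg: "bilinear g" and gs: "\<And>x y. g x y = g y x"
    and nd: "\<And>x. (\<And>y. g x y = 0) \<Longrightarrow> x = 0"
    and skew: "\<And>x y. g (A x) y = - g x (A y)" and square: "\<And>x. A (A x) = 0"
    and sig: "riemannian g \<or> lorentzian g"
  shows "A x = 0"
proof -
  have null: "g (A y) (A y) = 0" for y using skew[of y "A y"] square[of y] bg
    by (simp add: bilinear_rzero)
  show ?thesis
  proof (cases "riemannian g")
    case True thus ?thesis using null[of x] unfolding riemannian_def by force
  next
    case False
    hence lor: "lorentzian g" using sig by auto
    obtain t where tt: "g t t < 0" using lorentzian_timelike[OF lor] .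
    have null_orth: "s = 0" if "g s s = 0" "g s t = 0" for s
      using lorentzian_null_orthogonal[OF bg gs nd lor tt that] .
    have "A t = 0" using null_orth null[of t] skew[of t t] gs[of t "A t"] by simp
    hence "g (A x) t = 0" using skew[of x t] bg by (simp add: bilinear_rzero)
    thus ?thesis using null_orth null[of x] by simp
  qed
qed

section \<open>The Levi-Civita product of a metric on a quadratic Lie algebra\<close>

locale quadratic_metric =
  fixes br :: "'a::euclidean_space \<Rightarrow> 'a \<Rightarrow> 'a"
    and k :: "'a \<Rightarrow> 'a \<Rightarrow> real"
    and u :: "'a \<Rightarrow> 'a"
  assumes lie: "lie_algebra br"
    and quad: "quadratic_form br k"
    and linear_u: "linear u" and bij_u: "bij u"
    and k_sym_u: "\<forall>x y. k (u x) y = k x (u y)"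
begin

definition metric :: "'a \<Rightarrow> 'a \<Rightarrow> real" where "metric x y = k (u x) y"

definition levi_civita :: "'a \<Rightarrow> 'a \<Rightarrow> 'a" where
  "levi_civita x y = (1/2) *\<^sub>R (inv u (br x (u y) - br (u x) y) + br x y)"

lemma bilinear_br: "bilinear br" using lie unfolding lie_algebra_def by auto
lemma bilinear_k: "bilinear k" using quad unfolding quadratic_form_def sym_bilinear_nondeg_def by auto
lemma k_sym: "k x y = k y x" using quad unfolding quadratic_form_def sym_bilinear_nondeg_def by auto
lemma k_nondeg: "(\<And>y. k x y = 0) \<Longrightarrow> x = 0"
  using quad unfolding quadratic_form_def sym_bilinear_nondeg_def by auto
lemma k_invariant: "k (br x y) z = - k y (br x z)" using quad unfolding quadratic_form_def by auto

lemma br_anti: "br y x = - br x y"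
proof -
  have "br (x+y) (x+y) = 0" "br x x = 0" "br y y = 0" using lie unfolding lie_algebra_def by auto
  thus ?thesis using bilinear_br by (simp add: bilinear_ladd bilinear_radd eq_neg_iff_add_eq_0
        add.commute)
qed

lemma u_inv_u: "u (inv u x) = x" using bij_u by (simp add: bij_is_surj surj_f_inv_f)
lemma inv_u_u: "inv u (u x) = x" using bij_u by (simp add: bij_is_inj)

lemma linear_inv_u: "linear (inv u)"
proof (rule linearI)
  fix a b show "inv u (a + b) = inv u a + inv u b" by (metis linear_add[OF linear_u] u_inv_u inv_u_u)
next
  fix c a show "inv u (c *\<^sub>R a) = c *\<^sub>R inv u a" by (metis linear_scale[OF linear_u] u_inv_u inv_u_u)
qed

lemma metric_sym: "metric x y = metric y x" unfolding metric_def using k_sym_u k_sym by metis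

lemma bilinear_metric: "bilinear metric"
  unfolding bilinear_def metric_def
proof (intro conjI allI)
  fix x show "linear (\<lambda>y. k (u x) y)" using bilinear_k unfolding bilinear_def by auto
next
  fix y have "linear (\<lambda>x. k x y)" using bilinear_k unfolding bilinear_def by auto
  thus "linear (\<lambda>x. k (u x) y)" using linear_compose[OF linear_u] by (simp add: o_def)
qed

lemma metric_nondeg: "(\<And>y. metric x y = 0) \<Longrightarrow> x = 0"
  unfolding metric_def using k_nondeg inv_u_u linear_0[OF linear_inv_u] by metis

text \<open>The product satisfies the Koszul formula; invariance of k turns the two
  bracket terms into the terms involving u.\<close>

lemma koszul_levi_civita:
  "2 * metric (levi_civita x y) z = metric (br x y) z - metric (br y z) x + metric (br z x) y"
proof -
  have u_levi_civita: "u (levi_civita x y) = (1/2) *\<^sub>R (br x (u y) - br (u x) y + u (br x y))"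
    unfolding levi_civita_def using linear_u u_inv_u by (simp add: linear_scale linear_add)
  have "metric (br y z) x = k (u x) (br y z)" unfolding metric_def using k_sym_u k_sym by metis
  also have "\<dots> = k (br (u x) y) z" using k_invariant br_anti[of "u x" y] bilinear_k
    by (simp add: bilinear_lneg)
  finally have first: "metric (br y z) x = k (br (u x) y) z" .
  have "metric (br z x) y = k (u y) (br z x)" unfolding metric_def using k_sym_u k_sym by metis
  also have "\<dots> = k (br x (u y)) z" using k_invariant br_anti[of x z] bilinear_k
    by (simp add: bilinear_rneg)
  finally have second: "metric (br z x) y = k (br x (u y)) z" .
  show ?thesis unfolding first second unfolding metric_def u_levi_civita using bilinear_k
    by (simp add: bilinear_lmul bilinear_ladd bilinear_lsub)
qed

text \<open>By nondegeneracy the Koszul formula determines the Levi-Civita product.\<close>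

lemma lc_prod_eq: "lc_prod br (\<lambda>x y. k (u x) y) = levi_civita"
proof (intro ext)
  fix x y
  have metric: "(\<lambda>x y. k (u x) y) = metric" unfolding metric_def by auto
  show "lc_prod br (\<lambda>x y. k (u x) y) x y = levi_civita x y"
    unfolding metric lc_prod_def
  proof (rule the_equality)
    fix w assume w: "\<forall>z. 2 * metric w z = metric (br x y) z - metric (br y z) x + metric (br z x) y"
    have "metric (w - levi_civita x y) z = 0" for z
    proof -
      have "2 * metric w z = 2 * metric (levi_civita x y) z" using w koszul_levi_civita[of x y z] by simp
      thus ?thesis using bilinear_metric by (simp add: bilinear_lsub)
    qed
    thus "w = levi_civita x y" using metric_nondeg[of "w - levi_civita x y"] by simp
  qed (use koszul_levi_civita in auto)
qed

lemma levi_civita_skew: "metric (levi_civita x y) z = - metric y (levi_civita x z)"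
proof -
  have "2 * metric (levi_civita x y) z + 2 * metric (levi_civita x z) y = 0"
    unfolding koszul_levi_civita using bilinear_metric
    by (simp add: bilinear_lneg br_anti[of x y] br_anti[of y z] br_anti[of z x])
  thus ?thesis using metric_sym by simp
qed

lemma levi_civita_torsion_free: "levi_civita x y - levi_civita y x = br x y"
proof -
  have "inv u (br x (u y) - br (u x) y) = inv u (br y (u x) - br (u y) x)"
    using br_anti[of "u x" y] br_anti[of x "u y"] by (simp add: algebra_simps)
  hence "levi_civita x y - levi_civita y x = (1/2) *\<^sub>R (br x y - br y x)" unfolding levi_civita_def
    by (simp add: algebra_simps)
  thus ?thesis using br_anti[of y x] by (simp add: scaleR_2)
qed

lemma levi_civita_zero_left: "levi_civita 0 z = 0" and levi_civita_zero_right: "levi_civita z 0 = 0"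
  unfolding levi_civita_def using bilinear_br linear_u linear_inv_u
  by (simp_all add: bilinear_lzero bilinear_rzero linear_0)

section \<open>Left multiplication by central elements\<close>

lemma central_bracket: "e \<in> center br \<Longrightarrow> br e x = 0" unfolding center_def by auto

lemma levi_civita_central_comm: "e \<in> center br \<Longrightarrow> levi_civita e x = levi_civita x e"
  using levi_civita_torsion_free[of e x] central_bracket[of e x] by simp

lemma levi_civita_central_self: "e \<in> center br \<Longrightarrow> levi_civita e e = 0"
  unfolding levi_civita_def using central_bracket[of e] br_anti[of e "u e"] linear_inv_u
  by (simp add: linear_0)

text \<open>First assertion: flatness applied to [e,x] = 0 gives the square of L_e vanishes.\<close>

lemma central_square_zero:
  assumes flat: "flat br (\<lambda>x y. k (u x) y)" and e: "e \<in> center br"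
  shows "levi_civita e (levi_civita e x) = 0"
proof -
  have "levi_civita (br e x) e = levi_civita e (levi_civita x e) - levi_civita x (levi_civita e e)"
    using flat unfolding flat_def lc_prod_eq by auto
  hence "levi_civita e (levi_civita x e) = 0"
    using central_bracket[OF e] levi_civita_zero_left levi_civita_central_self[OF e] levi_civita_zero_right by simp
  thus ?thesis using levi_civita_central_comm[OF e] by simp
qed

lemma center_preserved:
  assumes e: "e \<in> center br" and vanish: "\<And>y. levi_civita e y = 0"
  shows "u e \<in> center br"
  unfolding center_def
proof (intro CollectI allI)
  fix y
  have "(1/2) *\<^sub>R inv u (- br (u e) y) = 0"
    using vanish[of y] unfolding levi_civita_def using central_bracket[OF e] by simp
  hence "u (inv u (- br (u e) y)) = 0" using linear_u by (simp add: linear_0)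
  thus "br (u e) y = 0" using u_inv_u by simp
qed

end

theorem mainTheorem11:
  fixes br :: "'a::euclidean_space \<Rightarrow> 'a \<Rightarrow> 'a"
    and k :: "'a \<Rightarrow> 'a \<Rightarrow> real"
    and u :: "'a \<Rightarrow> 'a"
  assumes "lie_algebra br"
    and "quadratic_form br k"
    and "linear u" and "bij u"
    and "\<forall>x y. k (u x) y = k x (u y)"
    and "flat br (\<lambda>x y. k (u x) y)"
  shows "(\<forall>e\<in>center br. \<forall>x. lc_prod br (\<lambda>x y. k (u x) y) e (lc_prod br (\<lambda>x y. k (u x) y) e x) = 0)
    \<and> ((riemannian (\<lambda>x y. k (u x) y) \<or> lorentzian (\<lambda>x y. k (u x) y)) \<longrightarrow>
         (\<forall>e\<in>center br. (\<forall>x. lc_prod br (\<lambda>x y. k (u x) y) e x = 0)) \<and> u ` center br \<subseteq> center br)"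
proof -
  interpret quadratic_metric br k u using assms(1-5) by (simp add: quadratic_metric_def)
  have metric: "(\<lambda>x y. k (u x) y) = metric" unfolding metric_def by auto
  have square_zero: "\<forall>e\<in>center br. \<forall>x. levi_civita e (levi_civita e x) = 0"
    using central_square_zero[OF assms(6)] by auto
  have vanish: "\<forall>e\<in>center br. \<forall>x. levi_civita e x = 0" if sig: "riemannian metric \<or> lorentzian metric"
    using skew_square_zero_vanishes[OF bilinear_metric metric_sym metric_nondeg levi_civita_skew _ sig]
      square_zero by blast
  show ?thesis unfolding lc_prod_eq unfolding metric using square_zero vanish center_preserved by blast
qed

end
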